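(* Let $m,k\in\mathbb{N}$, let $\beta,\mu\in\mathbb{C}$ with $\frac{1+\beta}{2}-m\notin\mathbb{Z}_0^-$, $\Re(\beta)>0$ and $\Re(\mu)>0$. Then \[ \int_0^\infty t^{\beta-1}e^{-\mu t}\,{}_2F_2\left[\begin{array}{r} -2m,\ -m-k-\tfrac{1}{2};\\ -2m-2k-1,\ \tfrac{1+\beta}{2}-m;\end{array}\mu t\right]_{2m} dt=\frac{\Gamma(\beta)}{\mu^{\beta}}\frac{\left(\frac{1}{2}\right)_m\left(\frac{2+\beta+2k}{2}\right)_m}{\left(\frac{1-\beta}{2}\right)_m\left(1+k\right)_m}. \]
   Context: $\mathbb{N}=\{1,2,3,\dots\}$, $\mathbb{Z}_0^-=\{0,-1,-2,\dots\}$. For $a\in\mathbb{C}$ and $n\in\mathbb{N}_0$, $(a)_0=1$ and $(a)_n=a(a+1)\cdots(a+n-1)$. For $N\in\mathbb{N}_0$, the truncated series is ${}_2F_2\left[\begin{array}{r} a_1,a_2;\\ b_1,b_2;\end{array}z\right]_N=\sum_{n=0}^{N}\frac{(a_1)_n(a_2)_n}{(b_1)_n(b_2)_n}\frac{z^n}{n!}$ (first $N+1$ terms). The left side is the Mellin transform $\int_0^\infty t^{s-1}f(t)\,dt$ at $s=\beta$; $\mu^{\beta}$ denotes the principal power. *)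

theory Defs
  imports "HOL-Analysis.Analysis"
begin

definition hyp2F2_trunc :: "complex \<Rightarrow> complex \<Rightarrow> complex \<Rightarrow> complex \<Rightarrow> complex \<Rightarrow> nat \<Rightarrow> complex" where
  "hyp2F2_trunc a1 a2 b1 b2 z N =
     (\<Sum>n\<le>N. (pochhammer a1 n * pochhammer a2 n) / (pochhammer b1 n * pochhammer b2 n)
              * z ^ n / of_nat (fact n))"

end

(*
  Expanding the truncated 2F2 and integrating term by term with
  int_0^oo t^(z-1) e^(-mu t) dt = Gamma(z) / mu^z  (Re z > 0, Re mu > 0)
  turns the left-hand side into Gamma(beta) / mu^beta times the terminating series
  3F2(-2m, -m-k-1/2, beta; -2m-2k-1, (1+beta)/2-m; 1), which Watson's theorem evaluates.

  Watson's sum F(m) = sum_n t(m,n) is proved with a WZ pair in m: for an explicit rational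
  certificate R, t(m+1,n) - rho(m) t(m,n) = G(n+1) - G(n) with G(n) = R(n) t(m+1,n), so summing
  over n telescopes to F(m+1) = rho(m) F(m), the recurrence of the claimed product.

  For complex mu the Gamma integral is reduced to real scalings: pick r > 0 with |r - mu| < r,
  expand e^((r - mu) t) into its power series and integrate termwise (dominated convergence);
  the resulting series is the binomial series of Gamma(z) (r - (r - mu))^(-z).
*)
theory Submission
  imports Defs
begin

definition hyp3F2_term :: "'a::field_char_0 \<Rightarrow> 'a \<Rightarrow> 'a \<Rightarrow> 'a \<Rightarrow> 'a \<Rightarrow> nat \<Rightarrow> 'a" where
  "hyp3F2_term a1 a2 a3 b1 b2 n =
     pochhammer a1 n * pochhammer a2 n * pochhammer a3 n / (pochhammer b1 n * pochhammer b2 n * fact n)"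

lemma hyp3F2_term_Suc:
  "hyp3F2_term a1 a2 a3 b1 b2 (Suc n) = hyp3F2_term a1 a2 a3 b1 b2 n *
     ((a1 + of_nat n) * (a2 + of_nat n) * (a3 + of_nat n) / ((b1 + of_nat n) * (b2 + of_nat n) * (of_nat n + 1)))"
  unfolding hyp3F2_term_def pochhammer_Suc fact_Suc of_nat_mult of_nat_Suc
  by (simp add: times_divide_times_eq ac_simps)

lemma pochhammer_plus_one:
  fixes c :: "'a::field"
  assumes "c \<noteq> 0"
  shows "pochhammer (c + 1) n = pochhammer c n * (c + of_nat n) / c"
  using pochhammer_rec[of c n] pochhammer_rec'[of c n] assms by (simp add: field_simps)

lemma pochhammer_plus_two:
  fixes c :: "'a::field"
  assumes "c \<noteq> 0" "c + 1 \<noteq> 0"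
  shows "pochhammer (c + 2) n = pochhammer c n * ((c + of_nat n) * (c + 1 + of_nat n)) / (c * (c + 1))"
proof -
  have "pochhammer (c + 2) n = pochhammer (c + 1 + 1) n"
    by (simp add: add.assoc)
  also have "\<dots> = pochhammer c n * (c + of_nat n) / c * (c + 1 + of_nat n) / (c + 1)"
    unfolding pochhammer_plus_one[OF assms(2)] pochhammer_plus_one[OF assms(1)] ..
  finally show ?thesis
    by simp
qed

lemma hyp3F2_term_shift:
  fixes a1 a2 a3 b1 b2 :: "'a::field_char_0"
  assumes "a1 \<noteq> 0" "a1 + 1 \<noteq> 0" "a2 \<noteq> 0" "b1 \<noteq> 0" "b1 + 1 \<noteq> 0" "b2 \<noteq> 0"
  shows "hyp3F2_term (a1 + 2) (a2 + 1) a3 (b1 + 2) (b2 + 1) n = hyp3F2_term a1 a2 a3 b1 b2 n *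
     ((a1 + of_nat n) * (a1 + 1 + of_nat n) / (a1 * (a1 + 1)) * ((a2 + of_nat n) / a2) *
      (b1 * (b1 + 1) / ((b1 + of_nat n) * (b1 + 1 + of_nat n))) * (b2 / (b2 + of_nat n)))"
  unfolding hyp3F2_term_def pochhammer_plus_one[OF assms(3)] pochhammer_plus_one[OF assms(6)]
    pochhammer_plus_two[OF assms(1,2)] pochhammer_plus_two[OF assms(4,5)]
  by (simp add: times_divide_times_eq ac_simps)

definition watson_term :: "nat \<Rightarrow> complex \<Rightarrow> nat \<Rightarrow> nat \<Rightarrow> complex" where
  "watson_term k b m = hyp3F2_term (- 2 * of_nat m) (- of_nat m - of_nat k - 1/2) b
     (- 2 * of_nat m - 2 * of_nat k - 1) ((1 + b) / 2 - of_nat m)"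

definition watson_value :: "nat \<Rightarrow> complex \<Rightarrow> nat \<Rightarrow> complex" where
  "watson_value k b m = pochhammer (1/2) m * pochhammer ((2 + b + 2 * of_nat k) / 2) m /
     (pochhammer ((1 - b) / 2) m * pochhammer (1 + of_nat k) m)"

definition watson_ratio :: "nat \<Rightarrow> complex \<Rightarrow> nat \<Rightarrow> complex" where
  "watson_ratio k b m = (1/2 + of_nat m) * ((2 + b + 2 * of_nat k) / 2 + of_nat m) /
     (((1 - b) / 2 + of_nat m) * (1 + of_nat k + of_nat m))"

definition watson_certificate :: "nat \<Rightarrow> nat \<Rightarrow> nat \<Rightarrow> complex" where
  "watson_certificate k m n = - of_nat n * (2 * of_nat n - 4 * of_nat m - 2 * of_nat k - 5) /
     (2 * (of_nat m + 1) * (of_nat n - 2 * of_nat m - 2 * of_nat k - 3))"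

lemma watson_value_Suc: "watson_value k b (Suc m) = watson_value k b m * watson_ratio k b m"
  unfolding watson_value_def watson_ratio_def pochhammer_Suc
  by (simp add: times_divide_times_eq ac_simps)

lemma watson_term_params:
  fixes k m :: nat and b :: complex
  defines "M \<equiv> of_nat m :: complex" and "K \<equiv> of_nat k :: complex"
  shows "watson_term k b (Suc m) =
      hyp3F2_term (- 2 * (M + 1)) (- (2 * M + 2 * K + 3) / 2) b (- (2 * M + 2 * K + 3)) (- (2 * M + 1 - b) / 2)"
    and "watson_term k b m =
      hyp3F2_term (- 2 * (M + 1) + 2) (- (2 * M + 2 * K + 3) / 2 + 1) b (- (2 * M + 2 * K + 3) + 2)
        (- (2 * M + 1 - b) / 2 + 1)"
proof -
  have "- 2 * of_nat (Suc m) = - 2 * (M + 1)" "- of_nat (Suc m) - of_nat k - 1/2 = - (2 * M + 2 * K + 3) / 2"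
    "- 2 * of_nat (Suc m) - 2 * of_nat k - 1 = - (2 * M + 2 * K + 3)"
    "(1 + b) / 2 - of_nat (Suc m) = - (2 * M + 1 - b) / 2"
    "- 2 * of_nat m = - 2 * (M + 1) + 2" "- of_nat m - of_nat k - 1/2 = - (2 * M + 2 * K + 3) / 2 + 1"
    "- 2 * of_nat m - 2 * of_nat k - 1 = - (2 * M + 2 * K + 3) + 2"
    "(1 + b) / 2 - of_nat m = - (2 * M + 1 - b) / 2 + 1"
    unfolding M_def K_def by (simp_all add: field_simps)
  then show "watson_term k b (Suc m) =
      hyp3F2_term (- 2 * (M + 1)) (- (2 * M + 2 * K + 3) / 2) b (- (2 * M + 2 * K + 3)) (- (2 * M + 1 - b) / 2)"
    and "watson_term k b m =
      hyp3F2_term (- 2 * (M + 1) + 2) (- (2 * M + 2 * K + 3) / 2 + 1) b (- (2 * M + 2 * K + 3) + 2)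
        (- (2 * M + 1 - b) / 2 + 1)"
    unfolding watson_term_def by (simp_all only:)
qed

lemma watson_term_step:
  fixes k m n :: nat and b :: complex
  defines "M \<equiv> of_nat m :: complex" and "K \<equiv> of_nat k :: complex" and "N \<equiv> of_nat n :: complex"
  shows "watson_term k b (Suc m) (Suc n) = watson_term k b (Suc m) n *
    ((N - 2 * M - 2) * ((2 * N - 2 * M - 2 * K - 3) / 2) * (b + N) /
     ((N - 2 * M - 2 * K - 3) * ((b + 2 * N - 2 * M - 1) / 2) * (N + 1)))"
proof -
  have "- 2 * (M + 1) + N = N - 2 * M - 2"
    "- (2 * M + 2 * K + 3) / 2 + N = (2 * N - 2 * M - 2 * K - 3) / 2"
    "- (2 * M + 2 * K + 3) + N = N - 2 * M - 2 * K - 3"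
    "- (2 * M + 1 - b) / 2 + N = (b + 2 * N - 2 * M - 1) / 2"
    by (simp_all add: field_simps)
  then show ?thesis
    unfolding watson_term_params(1)[of k b m, folded M_def K_def] hyp3F2_term_Suc N_def[symmetric]
    by (simp only:)
qed

lemma watson_term_contiguous:
  fixes k m n :: nat and b :: complex
  defines "M \<equiv> of_nat m :: complex" and "K \<equiv> of_nat k :: complex" and "N \<equiv> of_nat n :: complex"
  assumes "(1 + b) / 2 - of_nat (Suc m) \<noteq> 0"
  shows "watson_term k b m n = watson_term k b (Suc m) n *
    ((N - 2 * M - 2) * (N - 2 * M - 1) / ((- 2 * (M + 1)) * (- (2 * M + 1))) *
     (((2 * N - 2 * M - 2 * K - 3) / 2) / (- (2 * M + 2 * K + 3) / 2)) *
     ((- (2 * M + 2 * K + 3)) * (- 2 * (M + K + 1)) / ((N - 2 * M - 2 * K - 3) * (N - 2 * M - 2 * K - 2))) *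
     ((- (2 * M + 1 - b) / 2) / ((b + 2 * N - 2 * M - 1) / 2)))"
proof -
  have "Re (- 2 * (M + 1)) < 0" "Re (- 2 * (M + 1) + 1) < 0" "Re (- (2 * M + 2 * K + 3) / 2) < 0"
    "Re (- (2 * M + 2 * K + 3)) < 0" "Re (- (2 * M + 2 * K + 3) + 1) < 0"
    unfolding M_def K_def by simp_all
  then have "- 2 * (M + 1) \<noteq> 0" "- 2 * (M + 1) + 1 \<noteq> 0" "- (2 * M + 2 * K + 3) / 2 \<noteq> 0"
    "- (2 * M + 2 * K + 3) \<noteq> 0" "- (2 * M + 2 * K + 3) + 1 \<noteq> 0"
    by (auto simp: complex_eq_iff)
  moreover have "- (2 * M + 1 - b) / 2 \<noteq> 0"
    using assms(4) unfolding M_def by (simp add: field_simps)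
  ultimately have shift: "watson_term k b m n = watson_term k b (Suc m) n *
    ((- 2 * (M + 1) + N) * (- 2 * (M + 1) + 1 + N) / (- 2 * (M + 1) * (- 2 * (M + 1) + 1)) *
     ((- (2 * M + 2 * K + 3) / 2 + N) / (- (2 * M + 2 * K + 3) / 2)) *
     (- (2 * M + 2 * K + 3) * (- (2 * M + 2 * K + 3) + 1) /
      ((- (2 * M + 2 * K + 3) + N) * (- (2 * M + 2 * K + 3) + 1 + N))) *
     (- (2 * M + 1 - b) / 2 / (- (2 * M + 1 - b) / 2 + N)))"
    unfolding watson_term_params[of k b m, folded M_def K_def] N_def by (rule hyp3F2_term_shift)
  have "- 2 * (M + 1) + N = N - 2 * M - 2" "- 2 * (M + 1) + 1 = - (2 * M + 1)"
    "- (2 * M + 1) + N = N - 2 * M - 1"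
    "- (2 * M + 2 * K + 3) / 2 + N = (2 * N - 2 * M - 2 * K - 3) / 2"
    "- (2 * M + 2 * K + 3) + 1 = - 2 * (M + K + 1)" "- (2 * M + 2 * K + 3) + N = N - 2 * M - 2 * K - 3"
    "- 2 * (M + K + 1) + N = N - 2 * M - 2 * K - 2"
    "- (2 * M + 1 - b) / 2 + N = (b + 2 * N - 2 * M - 1) / 2"
    by (simp_all add: field_simps)
  with shift show ?thesis
    by (simp only:)
qed

lemma watson_denominators_nonzero:
  fixes k m n :: nat and b :: complex
  defines "M \<equiv> of_nat m :: complex" and "K \<equiv> of_nat k :: complex" and "N \<equiv> of_nat n :: complex"
  assumes "k \<ge> 1" and "n \<le> 2 * m + 2" and "(1 + b) / 2 - of_nat (Suc m) \<notin> \<int>\<^sub>\<le>\<^sub>0"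
  shows "N - 2 * M - 2 * K - 3 \<noteq> 0" and "N - 2 * M - 2 * K - 2 \<noteq> 0"
    and "2 * M + 1 - b \<noteq> 0" and "b + 2 * N - 2 * M - 1 \<noteq> 0"
proof -
  have "Re (N - 2 * M - 2 * K - 3) < 0" "Re (N - 2 * M - 2 * K - 2) < 0"
    using assms(4,5) unfolding M_def K_def N_def by simp_all
  then show "N - 2 * M - 2 * K - 3 \<noteq> 0" "N - 2 * M - 2 * K - 2 \<noteq> 0"
    by (auto simp: complex_eq_iff)
  have "(1 + b) / 2 - of_nat (Suc m) \<noteq> 0"
    using assms(6) by (metis zero_in_nonpos_Ints)
  moreover have E1: "2 * M + 1 - b = - 2 * ((1 + b) / 2 - of_nat (Suc m))"
    unfolding M_def by (simp add: field_simps)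
  ultimately show "2 * M + 1 - b \<noteq> 0"
    unfolding E1 mult_eq_0_iff by simp
  have "(1 + b) / 2 - of_nat (Suc m) + of_nat n \<noteq> 0"
  proof
    assume "(1 + b) / 2 - of_nat (Suc m) + of_nat n = 0"
    then have "(1 + b) / 2 - of_nat (Suc m) = - of_nat n"
      by (simp add: eq_neg_iff_add_eq_0)
    with assms(6) show False
      by simp
  qed
  moreover have E2: "b + 2 * N - 2 * M - 1 = 2 * ((1 + b) / 2 - of_nat (Suc m) + of_nat n)"
    unfolding M_def N_def by (simp add: field_simps)
  ultimately show "b + 2 * N - 2 * M - 1 \<noteq> 0"
    unfolding E2 mult_eq_0_iff by simp
qed

lemma watson_WZ_pair:
  fixes k m n :: nat and b :: complex
  assumes "k \<ge> 1" and "n \<le> 2 * m + 2" and "(1 + b) / 2 - of_nat (Suc m) \<notin> \<int>\<^sub>\<le>\<^sub>0"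
  shows "watson_term k b (Suc m) n - watson_ratio k b m * watson_term k b m n =
    watson_certificate k m (Suc n) * watson_term k b (Suc m) (Suc n) -
    watson_certificate k m n * watson_term k b (Suc m) n"
proof -
  define M K N :: complex where "M = of_nat m" and "K = of_nat k" and "N = of_nat n"
  define m1 m2 s l y where "m1 = M + 1" and "m2 = 2 * M + 1" and "s = 2 * M + 2 * K + 3"
    and "l = M + K + 1" and "y = m2 - b"
  define nu nv w p q z n1 where "nu = N - 2 * M - 2" and "nv = N - 2 * M - 1"
    and "w = 2 * N - 2 * M - 2 * K - 3" and "p = N - 2 * M - 2 * K - 3" and "q = N - 2 * M - 2 * K - 2"
    and "z = b + 2 * N - 2 * M - 1" and "n1 = N + 1"
  define c e0 e1 where "c = b + 2 * K + 2 * M + 2" and "e0 = 2 * N - 4 * M - 2 * K - 5"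
    and "e1 = 2 * N - 4 * M - 2 * K - 3"
  define T where "T = watson_term k b (Suc m) n"
  \<comment> \<open>Naming every linear factor keeps \<open>field_simps\<close> from multiplying out the products.\<close>
  note atoms = M_def[symmetric] K_def[symmetric] N_def[symmetric] m1_def[symmetric] m2_def[symmetric]
    s_def[symmetric] l_def[symmetric] y_def[symmetric] nu_def[symmetric] nv_def[symmetric] w_def[symmetric]
    p_def[symmetric] q_def[symmetric] z_def[symmetric] n1_def[symmetric] T_def[symmetric]
  have "(1 + b) / 2 - of_nat (Suc m) \<noteq> 0"
    using assms(3) by (metis zero_in_nonpos_Ints)
  from watson_term_contiguous[OF this, of k n] watson_term_step[of k b m n]
  have W0: "watson_term k b m n = T * (nu * nv / ((- 2 * m1) * (- m2)) * ((w / 2) / (- s / 2)) *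
      ((- s) * (- 2 * l) / (p * q)) * ((- y / 2) / (z / 2)))"
    and W1: "watson_term k b (Suc m) (Suc n) = T * (nu * (w / 2) * (b + N) / (p * (z / 2) * n1))"
    unfolding atoms by simp_all
  have R: "watson_ratio k b m = (m2 / 2) * (c / 2) / ((y / 2) * l)"
  proof -
    have "1/2 + M = m2 / 2" "(2 + b + 2 * K) / 2 + M = c / 2" "(1 - b) / 2 + M = y / 2" "1 + K + M = l"
      unfolding m2_def c_def y_def l_def by (simp_all add: field_simps)
    then show ?thesis
      unfolding watson_ratio_def atoms by (simp only:)
  qed
  have C0: "watson_certificate k m n = - N * e0 / (2 * m1 * p)"
    unfolding watson_certificate_def atoms e0_def[symmetric] ..
  have C1: "watson_certificate k m (Suc n) = - n1 * e1 / (2 * m1 * q)"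
  proof -
    have "2 * n1 - 4 * M - 2 * K - 5 = e1" "n1 - 2 * M - 2 * K - 3 = q"
      unfolding e1_def q_def n1_def by (simp_all add: field_simps)
    then show ?thesis
      unfolding watson_certificate_def of_nat_Suc add.commute[of 1] atoms by (simp only:)
  qed
  have "Re m1 > 0" "Re m2 > 0" "Re s > 0" "Re l > 0" "Re n1 > 0"
    unfolding m1_def m2_def s_def l_def n1_def M_def K_def N_def by simp_all
  then have "m1 \<noteq> 0" "m2 \<noteq> 0" "s \<noteq> 0" "l \<noteq> 0" "n1 \<noteq> 0"
    by (auto simp: complex_eq_iff)
  moreover have "p \<noteq> 0" "q \<noteq> 0" "y \<noteq> 0" "z \<noteq> 0"
    using watson_denominators_nonzero[OF assms] unfolding atoms by simp_all
  \<comment> \<open>The WZ identity with all denominators cleared:\<close>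
  moreover have "2 * m1 * p * q * z - c * nu * nv * w = N * e0 * q * z - e1 * nu * w * (b + N)"
    unfolding m1_def p_def q_def z_def c_def nu_def nv_def w_def e0_def e1_def by algebra
  ultimately show ?thesis
    unfolding W0 W1 R C0 C1 T_def[symmetric] by (simp add: field_simps) algebra
qed

lemma watson_term_eq_0: "2 * m < n \<Longrightarrow> watson_term k b m n = 0"
  by (auto simp: watson_term_def hyp3F2_term_def pochhammer_eq_0_iff intro!: exI[of _ "2 * m"])

lemma watson_sum:
  fixes k m :: nat and b :: complex
  assumes "k \<ge> 1" and "(1 + b) / 2 - of_nat m \<notin> \<int>\<^sub>\<le>\<^sub>0"
  shows "(\<Sum>n\<le>2 * m. watson_term k b m n) = watson_value k b m"
  using assms(2)
proof (induction m)
  case 0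
  show ?case
    by (simp add: watson_term_def hyp3F2_term_def watson_value_def)
next
  case (Suc m)
  have "(1 + b) / 2 - of_nat m \<notin> \<int>\<^sub>\<le>\<^sub>0"
  proof
    assume "(1 + b) / 2 - of_nat m \<in> \<int>\<^sub>\<le>\<^sub>0"
    then have "(1 + b) / 2 - of_nat m - 1 \<in> \<int>\<^sub>\<le>\<^sub>0"
      by (rule nonpos_Ints_diff_Nats) simp
    with Suc.prems show False
      by (simp add: algebra_simps)
  qed
  note IH = Suc.IH[OF this]
  define G where "G n = watson_certificate k m n * watson_term k b (Suc m) n" for n
  have "(\<Sum>n<2 * m + 3. watson_term k b (Suc m) n - watson_ratio k b m * watson_term k b m n)
      = (\<Sum>n<2 * m + 3. G (Suc n) - G n)"
    unfolding G_def using assms(1) Suc.prems by (intro sum.cong refl watson_WZ_pair) auto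
  also have "\<dots> = G (2 * m + 3) - G 0"
    by (rule sum_lessThan_telescope)
  also have "\<dots> = 0"
    by (simp add: G_def watson_certificate_def watson_term_eq_0)
  finally have telescoped: "(\<Sum>n<2 * m + 3. watson_term k b (Suc m) n) =
      watson_ratio k b m * (\<Sum>n<2 * m + 3. watson_term k b m n)"
    by (simp add: sum_subtractf sum_distrib_left)
  have "(\<Sum>n\<le>2 * Suc m. watson_term k b (Suc m) n) = (\<Sum>n<2 * m + 3. watson_term k b (Suc m) n)"
    by (intro sum.cong) auto
  also have "\<dots> = watson_ratio k b m * (\<Sum>n<2 * m + 3. watson_term k b m n)"
    by (rule telescoped)
  also have "(\<Sum>n<2 * m + 3. watson_term k b m n) = (\<Sum>n\<le>2 * m. watson_term k b m n)"
    by (intro sum.mono_neutral_right) (auto simp: watson_term_eq_0)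
  also have "\<dots> = watson_value k b m"
    by (rule IH)
  finally show ?case
    by (simp add: watson_value_Suc mult.commute)
qed

lemma Gamma_integral_real_scale:
  fixes z :: complex and r :: real
  assumes z: "Re z > 0" and r: "r > 0"
  shows "((\<lambda>t. of_real t powr (z - 1) * exp (- of_real r * of_real t)) has_integral Gamma z / of_real r powr z) {0<..}"
proof -
  \<comment> \<open>The substitution \<open>t \<mapsto> r * t\<close> is available for Lebesgue integrals, hence the detour.\<close>
  define f :: "real \<Rightarrow> complex" where "f t = of_real t powr (z - 1) / of_real (exp t)" for t
  have f_int: "set_integrable lebesgue {0<..} f"
    using absolutely_integrable_Gamma_integral'[OF z] unfolding f_def .
  have "(LINT t:{0<..}|lebesgue. f t) = Gamma z"
    using set_lebesgue_integral_eq_integral(2)[OF f_int] Gamma_integral_complex'[OF z]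
    unfolding f_def by (simp add: integral_unique)
  with f_int have "has_bochner_integral lebesgue (\<lambda>t. indicator {0<..} t *\<^sub>R f t) (Gamma z)"
    unfolding set_integrable_def set_lebesgue_integral_def has_bochner_integral_iff by simp
  then have "has_bochner_integral lebesgue (\<lambda>t. indicator {0<..} (r * t) *\<^sub>R f (r * t)) (Gamma z /\<^sub>R r)"
    using has_bochner_integral_lebesgue_real_affine_iff[of r "\<lambda>t. indicator {0<..} t *\<^sub>R f t" _ 0] r
    by simp
  moreover have "indicator {0<..} (r * t) = (indicator {0<..} t :: real)" for t
    using r by (simp add: indicator_def zero_less_mult_iff)
  ultimately have "((\<lambda>t. indicator {0<..} t *\<^sub>R f (r * t)) has_integral Gamma z /\<^sub>R r) UNIV"
    using has_integral_integral_lebesgue unfolding has_bochner_integral_iff by fastforce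
  moreover have "(\<lambda>t. indicator {0<..} t *\<^sub>R f (r * t)) = (\<lambda>t. if t \<in> {0<..} then f (r * t) else 0)"
    by (auto simp: fun_eq_iff)
  ultimately have "((\<lambda>t. f (r * t)) has_integral Gamma z /\<^sub>R r) {0<..}"
    using has_integral_restrict[of "{0<..}" UNIV "\<lambda>t. f (r * t)"] by (simp only: subset_UNIV)
  then have "((\<lambda>t. f (r * t) / of_real r powr (z - 1))
      has_integral (Gamma z /\<^sub>R r) / of_real r powr (z - 1)) {0<..}"
    by (rule has_integral_divide)
  moreover have "(Gamma z /\<^sub>R r) / of_real r powr (z - 1) = Gamma z / of_real r powr z"
    using r by (simp add: powr_diff scaleR_conv_of_real field_simps)
  moreover have "f (r * t) / of_real r powr (z - 1) = of_real t powr (z - 1) * exp (- of_real r * of_real t)"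
    if "t \<in> {0<..}" for t
  proof -
    have "exp (of_real r * of_real t) = (of_real (exp (r * t)) :: complex)"
      by (metis exp_of_real of_real_mult)
    then show ?thesis
      using r that by (simp add: f_def powr_times_real exp_minus field_simps)
  qed
  ultimately show ?thesis
    using has_integral_cong by (metis (no_types, lifting))
qed

lemma Gamma_div_powr_series:
  fixes z w :: complex and r :: real
  assumes z: "z \<notin> \<int>\<^sub>\<le>\<^sub>0" and r: "r > 0" and w: "norm w < r"
  shows "(\<lambda>j. w ^ j / fact j * (Gamma (z + of_nat j) / of_real r powr (z + of_nat j))) sums
    (Gamma z / (of_real r - w) powr z)"
proof -
  have r0: "(of_real r :: complex) \<noteq> 0"
    using r by simp
  have "norm (- (w / of_real r)) < 1"
    using r w by (simp add: norm_divide)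
  from sums_mult[OF gen_binomial_complex[OF this, of "- z"], of "Gamma z / of_real r powr z"]
  have "(\<lambda>j. Gamma z / of_real r powr z * ((- z gchoose j) * (- (w / of_real r)) ^ j)) sums
      (Gamma z / of_real r powr z * (1 + - (w / of_real r)) powr (- z))" .
  moreover have "Gamma z / of_real r powr z * (1 + - (w / of_real r)) powr (- z) = Gamma z / (of_real r - w) powr z"
  proof -
    have "of_real r - w = of_real r * (1 + - (w / of_real r))"
      using r0 by (simp add: field_simps)
    then have "(of_real r - w) powr z = of_real r powr z * (1 + - (w / of_real r)) powr z"
      using r by (simp add: powr_times_real_left)
    then show ?thesis
      by (simp add: powr_minus divide_inverse)
  qed
  moreover have "Gamma z / of_real r powr z * ((- z gchoose j) * (- (w / of_real r)) ^ j) =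
      w ^ j / fact j * (Gamma (z + of_nat j) / of_real r powr (z + of_nat j))" for j
  proof -
    have "Gamma (z + of_nat j) = Gamma z * pochhammer z j"
      using pochhammer_Gamma[OF z, of j] Gamma_nonzero[OF z] by (simp add: field_simps)
    moreover have "(of_real r :: complex) powr (z + of_nat j) = of_real r powr z * of_real r ^ j"
      using r0 by (simp add: powr_add powr_nat')
    moreover have "(- z gchoose j) * (- (w / of_real r)) ^ j =
        ((-1) ^ j * (-1) ^ j) * pochhammer z j * w ^ j / (fact j * of_real r ^ j)"
      by (simp add: gbinomial_pochhammer power_minus' power_divide)
    moreover have "(-1 :: complex) ^ j * (-1) ^ j = 1"
      by (simp add: power_mult_distrib[symmetric])
    ultimately show ?thesis
      using r0 by (simp add: field_simps)
  qed
  ultimately show ?thesis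
    by simp
qed

lemma norm_exp_partial_sum_le: "norm (\<Sum>j<N. x ^ j / fact j) \<le> exp (norm (x :: complex))"
proof -
  have exp_sums: "(\<lambda>j. norm x ^ j / fact j) sums exp (norm x)"
    using exp_converges[of "norm x"] by (simp add: divide_inverse_commute)
  have "norm (\<Sum>j<N. x ^ j / fact j) \<le> (\<Sum>j<N. norm x ^ j / fact j)"
    by (rule order_trans[OF norm_sum]) (simp add: norm_divide norm_power norm_fact)
  also have "\<dots> \<le> (\<Sum>j. norm x ^ j / fact j)"
    by (rule sum_le_suminf) (use exp_sums in \<open>auto simp: sums_iff\<close>)
  finally show ?thesis
    using exp_sums by (simp add: sums_iff)
qed

lemma of_real_powr_add_nat:
  assumes "t > 0"
  shows "complex_of_real t powr (z + of_nat n - 1) = of_real t powr (z - 1) * of_real t ^ n"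
proof -
  have "complex_of_real t powr (z + of_nat n - 1) = of_real t powr (z - 1) * of_real t powr of_nat n"
    by (subst powr_add[symmetric]) (simp add: algebra_simps)
  with assms show ?thesis
    by (simp add: powr_nat')
qed

lemma has_integral_Gamma_kernel_times_exp_partial_sum:
  fixes z w :: complex and r :: real
  assumes z: "Re z > 0" and r: "r > 0"
  shows "((\<lambda>t. of_real t powr (z - 1) * exp (- of_real r * of_real t) * (\<Sum>j<N. (w * of_real t) ^ j / fact j))
    has_integral (\<Sum>j<N. w ^ j / fact j * (Gamma (z + of_nat j) / of_real r powr (z + of_nat j)))) {0<..}"
  unfolding sum_distrib_left
proof (intro has_integral_sum finite_lessThan)
  fix j
  have "Re (z + of_nat j) > 0"
    using z by simp
  from has_integral_mult_right[OF Gamma_integral_real_scale[OF this r], of "w ^ j / fact j"]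
  show "((\<lambda>t. of_real t powr (z - 1) * exp (- of_real r * of_real t) * ((w * of_real t) ^ j / fact j))
      has_integral w ^ j / fact j * (Gamma (z + of_nat j) / of_real r powr (z + of_nat j))) {0<..}"
    by (rule has_integral_eq[rotated]) (simp add: of_real_powr_add_nat power_mult_distrib field_simps)
qed

lemma norm_of_real_minus_less_of_Re_pos:
  fixes \<mu> :: complex
  assumes "Re \<mu> > 0"
  defines "r \<equiv> norm \<mu> ^ 2 / Re \<mu>"
  shows "norm (of_real r - \<mu>) < r"
proof -
  have "\<mu> \<noteq> 0"
    using assms(1) by auto
  have "norm (of_real r - \<mu>) ^ 2 = (r - Re \<mu>) ^ 2 + Im \<mu> ^ 2"
    by (simp add: cmod_power2)
  also have "\<dots> = r ^ 2 - 2 * r * Re \<mu> + (Re \<mu> ^ 2 + Im \<mu> ^ 2)"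
    by (simp add: power2_diff)
  also have "Re \<mu> ^ 2 + Im \<mu> ^ 2 = norm \<mu> ^ 2"
    by (simp add: cmod_power2)
  also have "2 * r * Re \<mu> = 2 * norm \<mu> ^ 2"
    using assms(1) by (simp add: r_def)
  finally have "norm (of_real r - \<mu>) ^ 2 < r ^ 2"
    using \<open>\<mu> \<noteq> 0\<close> by simp
  moreover have "r > 0"
    using assms(1) \<open>\<mu> \<noteq> 0\<close> by (simp add: r_def)
  ultimately show ?thesis
    by (simp add: power2_less_imp_less)
qed

lemma Gamma_integral_complex_scale:
  fixes z \<mu> :: complex
  assumes z: "Re z > 0" and \<mu>: "Re \<mu> > 0"
  shows "((\<lambda>t. of_real t powr (z - 1) * exp (- \<mu> * of_real t)) has_integral Gamma z / \<mu> powr z) {0<..}"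
proof -
  define r where "r = norm \<mu> ^ 2 / Re \<mu>"
  define w where "w = of_real r - \<mu>"
  have w: "norm w < r"
    using norm_of_real_minus_less_of_Re_pos[OF \<mu>] by (simp add: r_def w_def)
  then have r: "r > 0"
    by (rule le_less_trans[OF norm_ge_zero])
  define g where "g t = of_real t powr (z - 1) * exp (- of_real r * of_real t)" for t :: real
  define F where "F N t = g t * (\<Sum>j<N. (w * of_real t) ^ j / fact j)" for N t
  define h where "h t = norm (of_real t powr (of_real (Re z) - 1) / of_real (exp ((r - norm w) * t)) :: complex)"
    for t :: real
  have "(F N has_integral (\<Sum>j<N. w ^ j / fact j * (Gamma (z + of_nat j) / of_real r powr (z + of_nat j)))) {0<..}"
    for N
    unfolding F_def g_def by (rule has_integral_Gamma_kernel_times_exp_partial_sum[OF z r])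
  moreover have "h integrable_on {0<..}"
    using absolutely_integrable_Gamma_integral[of "of_real (Re z)" "r - norm w"] z w
    unfolding h_def absolutely_integrable_on_def by simp
  moreover have "\<forall>t\<in>{0<..}. norm (F N t) \<le> h t" for N
  proof
    fix t :: real
    assume "t \<in> {0<..}"
    then have t: "t > 0" by simp
    have "norm (F N t) \<le> norm (g t) * exp (norm w * t)"
      unfolding F_def norm_mult using t norm_exp_partial_sum_le[where x = "w * of_real t" and N = N]
      by (intro mult_left_mono) (auto simp: norm_mult)
    also have "\<dots> = h t"
      using t by (simp add: g_def h_def norm_mult norm_divide norm_powr_real_powr exp_diff exp_minus
          field_simps flip: exp_of_real)
    finally show "norm (F N t) \<le> h t" .
  qed
  moreover have "\<forall>t\<in>{0<..}. (\<lambda>N. F N t) \<longlonglongrightarrow> of_real t powr (z - 1) * exp (- \<mu> * of_real t)"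
  proof
    fix t :: real
    have "(\<lambda>j. (w * of_real t) ^ j / fact j) sums exp (w * of_real t)"
      using exp_converges[of "w * of_real t"] by (simp add: scaleR_conv_of_real divide_inverse_commute)
    then have "(\<lambda>N. F N t) \<longlonglongrightarrow> g t * exp (w * of_real t)"
      unfolding F_def sums_def by (rule tendsto_mult_left)
    also have "g t * exp (w * of_real t) = of_real t powr (z - 1) * exp (- \<mu> * of_real t)"
      by (simp add: g_def w_def mult.assoc flip: exp_add) (simp add: algebra_simps)
    finally show "(\<lambda>N. F N t) \<longlonglongrightarrow> of_real t powr (z - 1) * exp (- \<mu> * of_real t)" .
  qed
  moreover have "z \<notin> \<int>\<^sub>\<le>\<^sub>0"
    using z by (auto elim!: nonpos_Ints_cases)
  then have "(\<lambda>N. \<Sum>j<N. w ^ j / fact j * (Gamma (z + of_nat j) / of_real r powr (z + of_nat j)))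
      \<longlonglongrightarrow> Gamma z / \<mu> powr z"
    using Gamma_div_powr_series[OF _ r w] unfolding sums_def w_def by simp
  ultimately show ?thesis
    by (rule has_integral_dominated_convergence)
qed

lemma has_integral_powr_exp_times_polynomial:
  fixes \<beta> \<mu> :: complex and a :: "nat \<Rightarrow> complex"
  assumes \<beta>: "Re \<beta> > 0" and \<mu>: "Re \<mu> > 0"
  shows "((\<lambda>t. of_real t powr (\<beta> - 1) * exp (- \<mu> * of_real t) * (\<Sum>n\<le>N. a n * (\<mu> * of_real t) ^ n))
    has_integral Gamma \<beta> / \<mu> powr \<beta> * (\<Sum>n\<le>N. a n * pochhammer \<beta> n)) {0<..}"
proof -
  have "\<beta> \<notin> \<int>\<^sub>\<le>\<^sub>0"
    using \<beta> by (auto elim!: nonpos_Ints_cases)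
  have "\<mu> \<noteq> 0"
    using \<mu> by auto
  have "((\<lambda>t. a n * \<mu> ^ n * (of_real t powr (\<beta> + of_nat n - 1) * exp (- \<mu> * of_real t)))
      has_integral Gamma \<beta> / \<mu> powr \<beta> * (a n * pochhammer \<beta> n)) {0<..}" for n
  proof -
    have "Re (\<beta> + of_nat n) > 0"
      using \<beta> by simp
    moreover have "Gamma (\<beta> + of_nat n) = Gamma \<beta> * pochhammer \<beta> n"
      using pochhammer_Gamma[of \<beta> n] Gamma_nonzero[of \<beta>] \<open>\<beta> \<notin> \<int>\<^sub>\<le>\<^sub>0\<close> by (simp add: field_simps)
    moreover have "\<mu> powr (\<beta> + of_nat n) = \<mu> powr \<beta> * \<mu> ^ n"
      using \<open>\<mu> \<noteq> 0\<close> by (simp add: powr_add powr_nat')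
    ultimately show ?thesis
      using has_integral_mult_right[OF Gamma_integral_complex_scale[OF _ \<mu>], of "\<beta> + of_nat n" "a n * \<mu> ^ n"]
        \<open>\<mu> \<noteq> 0\<close> by (simp add: field_simps)
  qed
  then have "((\<lambda>t. \<Sum>n\<le>N. a n * \<mu> ^ n * (of_real t powr (\<beta> + of_nat n - 1) * exp (- \<mu> * of_real t)))
      has_integral (\<Sum>n\<le>N. Gamma \<beta> / \<mu> powr \<beta> * (a n * pochhammer \<beta> n))) {0<..}"
    by (intro has_integral_sum) auto
  then show ?thesis
    unfolding sum_distrib_left[symmetric]
    by (rule has_integral_eq[rotated])
      (simp add: of_real_powr_add_nat sum_distrib_left power_mult_distrib ac_simps)
qed

theorem mainTheorem17:
  fixes m k :: nat and \<beta> \<mu> :: complex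
  assumes "m \<ge> 1" and "k \<ge> 1"
    and "(1 + \<beta>) / 2 - of_nat m \<notin> \<int>\<^sub>\<le>\<^sub>0"
    and "Re \<beta> > 0" and "Re \<mu> > 0"
  shows "((\<lambda>t::real. of_real t powr (\<beta> - 1) * exp (- \<mu> * of_real t) *
            hyp2F2_trunc (- 2 * of_nat m) (- of_nat m - of_nat k - 1/2)
                         (- 2 * of_nat m - 2 * of_nat k - 1) ((1 + \<beta>) / 2 - of_nat m)
                         (\<mu> * of_real t) (2 * m))
          has_integral
          (Gamma \<beta> / \<mu> powr \<beta> *
            (pochhammer (1/2) m * pochhammer ((2 + \<beta> + 2 * of_nat k) / 2) m) /
            (pochhammer ((1 - \<beta>) / 2) m * pochhammer (1 + of_nat k) m))) {0<..}"
proof -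
  define a where "a n = pochhammer (- 2 * of_nat m) n * pochhammer (- of_nat m - of_nat k - 1/2) n /
    (pochhammer (- 2 * of_nat m - 2 * of_nat k - 1) n * pochhammer ((1 + \<beta>) / 2 - of_nat m) n * fact n)" for n
  have "hyp2F2_trunc (- 2 * of_nat m) (- of_nat m - of_nat k - 1/2) (- 2 * of_nat m - 2 * of_nat k - 1)
      ((1 + \<beta>) / 2 - of_nat m) (\<mu> * of_real t) (2 * m) = (\<Sum>n\<le>2 * m. a n * (\<mu> * of_real t) ^ n)" for t
    unfolding hyp2F2_trunc_def a_def by (simp add: field_simps)
  moreover have "(\<Sum>n\<le>2 * m. a n * pochhammer \<beta> n) = watson_value k \<beta> m"
    unfolding watson_sum[OF assms(2,3), symmetric] a_def watson_term_def hyp3F2_term_def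
    by (simp add: field_simps)
  ultimately show ?thesis
    using has_integral_powr_exp_times_polynomial[OF assms(4,5), of a "2 * m"]
    by (simp add: watson_value_def)
qed

end
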